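(* Let $d_1$ and $d_2$ be two metrics on the same set $X$. The following three statements are equivalent: (i) the set of sequences in $X$ that are $d_1$-statistically convergent coincides with the set of sequences in $X$ that are $d_2$-statistically convergent; (ii) the set of sequences that converge in $(X,d_1)$ coincides with the set of sequences that converge in $(X,d_2)$; (iii) $d_1$ and $d_2$ induce the same topology on $X$.
   Context: For a metric $d$ on $X$, a sequence $(x_n)$ of points of $X$ is $d$-statistically convergent to $a\in X$ if for every $\epsilon>0$, $\lim_{n\to\infty}\frac{1}{n}\left|\{k: k\le n,\ d(x_k,a)\ge\epsilon\}\right|=0$ ($|B|$ is the cardinality of $B$); it is $d$-statistically convergent if it is $d$-statistically convergent to some point of $X$. *)

theory Defs
  imports "HOL-Analysis.Analysis"
begin

definition stat_convergent_to :: "'a set \<Rightarrow> ('a \<Rightarrow> 'a \<Rightarrow> real) \<Rightarrow> (nat \<Rightarrow> 'a) \<Rightarrow> 'a \<Rightarrow> bool" where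
  "stat_convergent_to X d x a \<longleftrightarrow> a \<in> X \<and>
     (\<forall>\<epsilon>>0. (\<lambda>n. real (card {k. k < n \<and> d (x k) a \<ge> \<epsilon>}) / real n) \<longlonglongrightarrow> 0)"

definition stat_convergent :: "'a set \<Rightarrow> ('a \<Rightarrow> 'a \<Rightarrow> real) \<Rightarrow> (nat \<Rightarrow> 'a) \<Rightarrow> bool" where
  "stat_convergent X d x \<longleftrightarrow> (\<exists>a. stat_convergent_to X d x a)"

end

theory Submission
  imports Defs
begin

text \<open>Convergence implies statistical convergence, and statistical convergence only depends on
the neighbourhoods of the limit, so equal topologies give equal classes of (statistically)
convergent sequences. Conversely, if a set is \<open>d\<^sub>1\<close>-open but not \<open>d\<^sub>2\<close>-open, there is a point \<open>a\<close>
and a sequence \<open>x\<close> converging to \<open>a\<close> for \<open>d\<^sub>2\<close> while staying \<open>\<epsilon>\<close>-far from \<open>a\<close> for \<open>d\<^sub>1\<close>. Interleaving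
\<open>x\<close> with the constant sequence \<open>a\<close> yields a \<open>d\<^sub>2\<close>-convergent sequence that is not
\<open>d\<^sub>1\<close>-statistically convergent: for a limit \<open>c = a\<close> the even terms, for \<open>c \<noteq> a\<close> the odd terms
are far from \<open>c\<close>, and each of these index sets has density \<open>1/2\<close>.\<close>

definition zero_density :: "(nat \<Rightarrow> bool) \<Rightarrow> bool" where
  "zero_density P \<longleftrightarrow> (\<lambda>n. real (card {k. k < n \<and> P k}) / real n) \<longlonglongrightarrow> 0"

definition convergent_seqs :: "'a set \<Rightarrow> ('a \<Rightarrow> 'a \<Rightarrow> real) \<Rightarrow> (nat \<Rightarrow> 'a) set" where
  "convergent_seqs X d =
     {x. range x \<subseteq> X \<and> (\<exists>a. limitin (Metric_space.mtopology X d) x a sequentially)}"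

definition stat_convergent_seqs :: "'a set \<Rightarrow> ('a \<Rightarrow> 'a \<Rightarrow> real) \<Rightarrow> (nat \<Rightarrow> 'a) set" where
  "stat_convergent_seqs X d = {x. range x \<subseteq> X \<and> stat_convergent X d x}"

lemma stat_convergent_to_iff_zero_density:
  "stat_convergent_to X d x a \<longleftrightarrow> a \<in> X \<and> (\<forall>\<epsilon>>0. zero_density (\<lambda>k. d (x k) a \<ge> \<epsilon>))"
  by (simp add: stat_convergent_to_def zero_density_def)

lemma zero_density_mono:
  assumes "zero_density Q" and "\<And>k. P k \<Longrightarrow> Q k"
  shows "zero_density P"
proof -
  have "card {k. k < n \<and> P k} \<le> card {k. k < n \<and> Q k}" for n
    by (rule card_mono) (use assms(2) in auto)
  then have le: "real (card {k. k < n \<and> P k}) / real n \<le> real (card {k. k < n \<and> Q k}) / real n" for n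
    by (simp add: divide_right_mono)
  show ?thesis
    unfolding zero_density_def
    by (rule tendsto_sandwich[OF _ _ tendsto_const assms(1)[unfolded zero_density_def]])
      (use le in auto)
qed

lemma zero_density_finite:
  assumes "finite {k. P k}"
  shows "zero_density P"
proof -
  have "card {k. k < n \<and> P k} \<le> card {k. P k}" for n
    by (rule card_mono) (use assms in auto)
  then have le: "real (card {k. k < n \<and> P k}) / real n \<le> real (card {k. P k}) / real n" for n
    by (simp add: divide_right_mono)
  show ?thesis
    unfolding zero_density_def
    by (rule tendsto_sandwich[OF _ _ tendsto_const lim_const_over_n[of "real (card {k. P k})"]])
      (use le in auto)
qed

lemma not_zero_density_parity_class:
  assumes P: "\<And>i. P (2 * i + r)" and "r \<le> 1"
  shows "\<not> zero_density P"
proof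
  assume "zero_density P"
  then have "eventually (\<lambda>n. real (card {k. k < n \<and> P k}) / real n < 1/4) sequentially"
    unfolding zero_density_def by (rule order_tendstoD(2)) simp
  then obtain N where N: "\<And>n. n \<ge> N \<Longrightarrow> real (card {k. k < n \<and> P k}) / real n < 1/4"
    by (auto simp: eventually_sequentially)
  define n where "n = max N 2"
  have "2 * i + r < n" if "i < n div 2" for i
  proof -
    have "2 * (n div 2) \<le> n" by simp
    with that \<open>r \<le> 1\<close> show ?thesis by linarith
  qed
  then have "(\<lambda>i. 2 * i + r) ` {..<n div 2} \<subseteq> {k. k < n \<and> P k}"
    using P by auto
  from card_mono[OF _ this] have "real (n div 2) \<le> real (card {k. k < n \<and> P k})"
    by (simp add: card_image inj_on_def)
  moreover have "n \<ge> 2" "real n / 4 \<le> real (n div 2)"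
    by (simp_all add: n_def)
  ultimately show False
    using N[of n] by (simp add: n_def field_simps)
qed

lemma (in Metric_space) limitin_imp_stat_convergent_to:
  assumes "limitin mtopology x a sequentially"
  shows "stat_convergent_to M d x a"
  unfolding stat_convergent_to_iff_zero_density
proof (intro conjI allI impI)
  show "a \<in> M"
    using assms by (rule limitin_mspace)
  fix \<epsilon> :: real
  assume "\<epsilon> > 0"
  then obtain N where "\<forall>n\<ge>N. d (x n) a < \<epsilon>"
    using assms by (fastforce simp: limit_metric_sequentially)
  then have "{k. d (x k) a \<ge> \<epsilon>} \<subseteq> {..<N}"
    by (auto simp: not_less[symmetric])
  then show "zero_density (\<lambda>k. d (x k) a \<ge> \<epsilon>)"
    by (intro zero_density_finite) (auto intro: finite_subset)
qed

lemma convergent_seqs_subset_stat_convergent_seqs: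
  assumes "Metric_space X d"
  shows "convergent_seqs X d \<subseteq> stat_convergent_seqs X d"
  using Metric_space.limitin_imp_stat_convergent_to[OF assms]
  by (auto simp: convergent_seqs_def stat_convergent_seqs_def stat_convergent_def)

lemma stat_convergent_to_transfer:
  assumes "Metric_space X d1" and "Metric_space X d2"
    and finer: "\<And>U. openin (Metric_space.mtopology X d2) U \<Longrightarrow> openin (Metric_space.mtopology X d1) U"
    and "range x \<subseteq> X" and "stat_convergent_to X d1 x a"
  shows "stat_convergent_to X d2 x a"
proof -
  interpret M1: Metric_space X d1 by fact
  interpret M2: Metric_space X d2 by fact
  have a: "a \<in> X" and dens1: "\<And>\<delta>. \<delta> > 0 \<Longrightarrow> zero_density (\<lambda>k. d1 (x k) a \<ge> \<delta>)"
    using assms(5) by (auto simp: stat_convergent_to_iff_zero_density)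
  show ?thesis
    unfolding stat_convergent_to_iff_zero_density
  proof (intro conjI allI impI a)
    fix \<epsilon> :: real
    assume "\<epsilon> > 0"
    then have "openin M1.mtopology (M2.mball a \<epsilon>)" "a \<in> M2.mball a \<epsilon>"
      using finer a by auto
    then obtain \<delta> where "\<delta> > 0" and \<delta>: "M1.mball a \<delta> \<subseteq> M2.mball a \<epsilon>"
      using M1.openin_mtopology by blast
    have far: "d1 (x k) a \<ge> \<delta>" if "d2 (x k) a \<ge> \<epsilon>" for k
    proof (rule ccontr)
      assume "\<not> d1 (x k) a \<ge> \<delta>"
      then have "x k \<in> M1.mball a \<delta>"
        using a \<open>range x \<subseteq> X\<close> by (auto simp: M1.commute)
      with \<delta> that show False
        by (auto simp: M2.commute)
    qed
    show "zero_density (\<lambda>k. d2 (x k) a \<ge> \<epsilon>)"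
      by (rule zero_density_mono[OF dens1[OF \<open>\<delta> > 0\<close>] far])
  qed
qed

lemma stat_convergent_seqs_subset:
  assumes "Metric_space X d1" and "Metric_space X d2"
    and "\<And>U. openin (Metric_space.mtopology X d2) U \<Longrightarrow> openin (Metric_space.mtopology X d1) U"
  shows "stat_convergent_seqs X d1 \<subseteq> stat_convergent_seqs X d2"
  using stat_convergent_to_transfer[OF assms]
  unfolding stat_convergent_seqs_def stat_convergent_def by blast

lemma limitin_interleave_const:
  assumes "limitin T x a sequentially"
  shows "limitin T (\<lambda>k. if even k then x (k div 2) else a) a sequentially"
  unfolding limitin_sequentially
proof (intro conjI allI impI)
  show "a \<in> topspace T"
    using assms by (simp add: limitin_sequentially)
  fix U
  assume U: "openin T U \<and> a \<in> U"
  then obtain N where "\<forall>n\<ge>N. x n \<in> U"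
    using assms by (auto simp: limitin_sequentially)
  with U show "\<exists>N. \<forall>k\<ge>N. (if even k then x (k div 2) else a) \<in> U"
    by (intro exI[of _ "2 * N"]) auto
qed

lemma (in Metric_space) not_stat_convergent_interleave_const:
  assumes "a \<in> M" and "\<epsilon> > 0" and far: "\<And>n. d (x n) a \<ge> \<epsilon>"
  shows "\<not> stat_convergent M d (\<lambda>k. if even k then x (k div 2) else a)"
    (is "\<not> stat_convergent M d ?z")
proof
  assume "stat_convergent M d ?z"
  then obtain c where "c \<in> M" and dens: "\<And>\<delta>. \<delta> > 0 \<Longrightarrow> zero_density (\<lambda>k. d (?z k) c \<ge> \<delta>)"
    by (auto simp: stat_convergent_def stat_convergent_to_iff_zero_density)
  show False
  proof (cases "c = a")
    case True
    have "\<not> zero_density (\<lambda>k. d (?z k) c \<ge> \<epsilon>)"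
      by (rule not_zero_density_parity_class[where r = 0]) (simp_all add: far True)
    with dens \<open>\<epsilon> > 0\<close> show False by blast
  next
    case False
    have "\<not> zero_density (\<lambda>k. d (?z k) c \<ge> d a c)"
      by (rule not_zero_density_parity_class[where r = 1]) simp_all
    moreover have "d a c > 0"
      using False \<open>a \<in> M\<close> \<open>c \<in> M\<close> by simp
    ultimately show False
      using dens by blast
  qed
qed

lemma obtain_limitin_sequence_far_from_limit:
  assumes "Metric_space X d1" and "Metric_space X d2"
    and "openin (Metric_space.mtopology X d1) S" and "\<not> openin (Metric_space.mtopology X d2) S"
  obtains x a \<epsilon> where "range x \<subseteq> X" "a \<in> X" "\<epsilon> > 0"
    "limitin (Metric_space.mtopology X d2) x a sequentially" "\<And>n. d1 (x n) a \<ge> \<epsilon>"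
proof -
  interpret M1: Metric_space X d1 by fact
  interpret M2: Metric_space X d2 by fact
  have "S \<subseteq> X"
    using assms(3) M1.openin_mtopology by blast
  then obtain a where "a \<in> S" and no_ball: "\<forall>r>0. \<not> M2.mball a r \<subseteq> S"
    using assms(4) unfolding M2.openin_mtopology by blast
  then have "a \<in> X"
    using \<open>S \<subseteq> X\<close> by blast
  obtain \<epsilon> where "\<epsilon> > 0" and ball: "M1.mball a \<epsilon> \<subseteq> S"
    using assms(3) \<open>a \<in> S\<close> unfolding M1.openin_mtopology by blast
  have "\<exists>y. y \<in> M2.mball a (inverse (real (Suc n))) - S" for n
    using no_ball by (metis Diff_iff inverse_positive_iff_positive of_nat_0_less_iff subsetI zero_less_Suc)
  then obtain x where x: "\<And>n. x n \<in> M2.mball a (inverse (real (Suc n))) - S"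
    by metis
  then have "range x \<subseteq> X" and far: "\<And>n. d1 (x n) a \<ge> \<epsilon>"
    using ball \<open>a \<in> X\<close> by (fastforce simp: M1.commute not_less)+
  have "(\<lambda>n. d2 (x n) a) \<longlonglongrightarrow> 0"
    by (rule tendsto_sandwich[OF _ _ tendsto_const LIMSEQ_inverse_real_of_nat])
      (use x in \<open>auto simp: M2.commute less_imp_le\<close>)
  moreover have "\<forall>\<^sub>F n in sequentially. x n \<in> X"
    using \<open>range x \<subseteq> X\<close> by (auto intro: always_eventually)
  ultimately have "limitin M2.mtopology x a sequentially"
    using \<open>a \<in> X\<close> by (simp add: M2.limitin_metric_dist_null)
  with that \<open>range x \<subseteq> X\<close> \<open>a \<in> X\<close> \<open>\<epsilon> > 0\<close> far show ?thesis
    by blast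
qed

lemma openin_mtopology_if_convergent_seqs_subset:
  assumes "Metric_space X d1" and "Metric_space X d2"
    and conv: "convergent_seqs X d2 \<subseteq> stat_convergent_seqs X d1"
    and "openin (Metric_space.mtopology X d1) S"
  shows "openin (Metric_space.mtopology X d2) S"
proof (rule ccontr)
  assume "\<not> openin (Metric_space.mtopology X d2) S"
  then obtain x a \<epsilon> where "range x \<subseteq> X" "a \<in> X" "\<epsilon> > 0"
    and lim: "limitin (Metric_space.mtopology X d2) x a sequentially" and far: "\<And>n. d1 (x n) a \<ge> \<epsilon>"
    using obtain_limitin_sequence_far_from_limit[OF assms(1,2,4)] by blast
  let ?z = "\<lambda>k. if even k then x (k div 2) else a"
  have "range ?z \<subseteq> X"
    using \<open>range x \<subseteq> X\<close> \<open>a \<in> X\<close> by auto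
  with limitin_interleave_const[OF lim] have "?z \<in> convergent_seqs X d2"
    by (auto simp: convergent_seqs_def)
  with conv have "stat_convergent X d1 ?z"
    by (auto simp: stat_convergent_seqs_def)
  with Metric_space.not_stat_convergent_interleave_const[OF assms(1) \<open>a \<in> X\<close> \<open>\<epsilon> > 0\<close> far]
  show False
    by contradiction
qed

lemma mtopology_eq_if_convergent_seqs_subset:
  assumes "Metric_space X d1" and "Metric_space X d2"
    and "convergent_seqs X d2 \<subseteq> stat_convergent_seqs X d1"
    and "convergent_seqs X d1 \<subseteq> stat_convergent_seqs X d2"
  shows "Metric_space.mtopology X d1 = Metric_space.mtopology X d2"
proof (rule topology_eq[THEN iffD2], intro allI iffI)
  fix S
  show "openin (Metric_space.mtopology X d2) S" if "openin (Metric_space.mtopology X d1) S"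
    by (rule openin_mtopology_if_convergent_seqs_subset[OF assms(1,2,3) that])
  show "openin (Metric_space.mtopology X d1) S" if "openin (Metric_space.mtopology X d2) S"
    by (rule openin_mtopology_if_convergent_seqs_subset[OF assms(2,1,4) that])
qed

theorem theorem2:
  fixes X :: "'a set" and d1 d2 :: "'a \<Rightarrow> 'a \<Rightarrow> real"
  assumes "Metric_space X d1" and "Metric_space X d2"
  defines "SC1 \<equiv> {x. range x \<subseteq> X \<and> stat_convergent X d1 x}"
      and "SC2 \<equiv> {x. range x \<subseteq> X \<and> stat_convergent X d2 x}"
      and "C1 \<equiv> {x. range x \<subseteq> X \<and> (\<exists>a. limitin (Metric_space.mtopology X d1) x a sequentially)}"
      and "C2 \<equiv> {x. range x \<subseteq> X \<and> (\<exists>a. limitin (Metric_space.mtopology X d2) x a sequentially)}"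
  shows "(SC1 = SC2 \<longleftrightarrow> C1 = C2) \<and>
         (C1 = C2 \<longleftrightarrow> Metric_space.mtopology X d1 = Metric_space.mtopology X d2)"
proof -
  let ?T1 = "Metric_space.mtopology X d1" and ?T2 = "Metric_space.mtopology X d2"
  have sets: "SC1 = stat_convergent_seqs X d1" "SC2 = stat_convergent_seqs X d2"
    "C1 = convergent_seqs X d1" "C2 = convergent_seqs X d2"
    by (simp_all add: SC1_def SC2_def C1_def C2_def stat_convergent_seqs_def convergent_seqs_def)
  have C_SC: "C1 \<subseteq> SC1" "C2 \<subseteq> SC2"
    unfolding sets by (rule convergent_seqs_subset_stat_convergent_seqs, fact)+
  have "C1 = C2" if "?T1 = ?T2"
    using that by (simp add: C1_def C2_def)
  moreover have "SC1 = SC2" if "?T1 = ?T2"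
    unfolding sets
    by (intro subset_antisym stat_convergent_seqs_subset assms) (simp_all add: that)
  moreover have "?T1 = ?T2" if "C1 = C2 \<or> SC1 = SC2"
    using that C_SC
    by (intro mtopology_eq_if_convergent_seqs_subset assms) (auto simp flip: sets)
  ultimately show ?thesis
    by blast
qed

end
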